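(* Inner p-reflexivity fails in general: there exist a language $L$, an $L$-algebra $\mathfrak A$ with universe $A$, and elements $a,c\in A$ such that $a:a\not\approx_{\mathfrak A}c:c$.
   Context: Let $L$ be a language of algebras: a set of function symbols, each with an arity in $\mathbb N$ (constants are 0-ary function symbols). Fix a countably infinite set $X$ of variables; $T_{L,X}$ is the set of $L$-terms over $X$, and $X(s)$ denotes the set of variables occurring in a term $s$. For an $L$-algebra $\mathfrak A$ with universe $A$, every term $s$ induces a function $s^{\mathfrak A}$, evaluated at assignments of elements of $A$ to variables. An arrow of $\mathfrak A$ is a pair $(a,b)\in A\times A$, written $a\to b$. The generalizations of an arrow $a\to b$ in $\mathfrak A$ are the pairs of arbitrary terms $s\to t$ with $s,t\in T_{L,X}$ such that there is an assignment $\sigma$ of elements of $A$ to the variables in $X(s)\cup X(t)$ with $s^{\mathfrak A}(\sigma)=a$ and $t^{\mathfrak A}(\sigma)=b$; their set is denoted $\uparrow_{\mathfrak A}(a\to b)$. For $L$-algebras $\mathfrak A,\mathfrak B$, an arrow $a\to b$ of $\mathfrak A$ and an arrow $c\to d$ of $\mathfrak B$, set $(a\to b)\uparrow_{(\mathfrak A,\mathfrak B)}(c\to d):=\uparrow_{\mathfrak A}(a\to b)\cap\uparrow_{\mathfrak B}(c\to d)$. A pair of terms $s\to t$ is trivial in $(\mathfrak A,\mathfrak B)$ if it belongs to $\uparrow_{\mathfrak A}(e)$ for every arrow $e$ of $\mathfrak A$ and to $\uparrow_{\mathfrak B}(e')$ for every arrow $e'$ of $\mathfrak B$. We write $a\to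 b\lesssim_{(\mathfrak A,\mathfrak B)}c\to d$ iff either (i) every element of $\uparrow_{\mathfrak A}(a\to b)\cup\uparrow_{\mathfrak B}(c\to d)$ is trivial in $(\mathfrak A,\mathfrak B)$, or (ii) $(a\to b)\uparrow_{(\mathfrak A,\mathfrak B)}(c\to d)$ contains an element not trivial in $(\mathfrak A,\mathfrak B)$ and, for every arrow $c'\to d'$ of $\mathfrak B$, the inclusion $(a\to b)\uparrow_{(\mathfrak A,\mathfrak B)}(c\to d)\subseteq(a\to b)\uparrow_{(\mathfrak A,\mathfrak B)}(c'\to d')$ implies equality of these two sets. Define $a\to b\approx_{(\mathfrak A,\mathfrak B)}c\to d$ iff $a\to b\lesssim_{(\mathfrak A,\mathfrak B)}c\to d$ and $c\to d\lesssim_{(\mathfrak B,\mathfrak A)}a\to b$. For $a,b\in A$ and $c,d\in B$, the similarity-based analogical proportion $a:b\approx_{(\mathfrak A,\mathfrak B)}c:d$ holds iff $a\to b\approx_{(\mathfrak A,\mathfrak B)}c\to d$ and $b\to a\approx_{(\mathfrak A,\mathfrak B)}d\to c$. We write $\approx_{\mathfrak A}$ for $\approx_{(\mathfrak A,\mathfrak A)}$. *)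

theory Defs
  imports Main
begin

text \<open>Terms over function symbols 'f and variables 'v (the variable set X is nat:
 countably infinite).\<close>
datatype ('f, 'v) trm = Var 'v | Fun 'f "('f, 'v) trm list"

fun vars :: "('f, 'v) trm \<Rightarrow> 'v set" where
  "vars (Var x) = {x}"
| "vars (Fun f ts) = (\<Union>t\<in>set ts. vars t)"

text \<open>A language is a set Fs of function symbols with an arity function ar.\<close>
fun wf_term :: "'f set \<Rightarrow> ('f \<Rightarrow> nat) \<Rightarrow> ('f, 'v) trm \<Rightarrow> bool" where
  "wf_term Fs ar (Var x) = True"
| "wf_term Fs ar (Fun f ts) = (f \<in> Fs \<and> length ts = ar f \<and> (\<forall>t\<in>set ts. wf_term Fs ar t))"

definition is_algebra :: "'f set \<Rightarrow> ('f \<Rightarrow> nat) \<Rightarrow> 'a set \<Rightarrow> ('f \<Rightarrow> 'a list \<Rightarrow> 'a) \<Rightarrow> bool" where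
  "is_algebra Fs ar A I \<longleftrightarrow> A \<noteq> {} \<and>
     (\<forall>f\<in>Fs. \<forall>xs. length xs = ar f \<and> set xs \<subseteq> A \<longrightarrow> I f xs \<in> A)"

fun eval :: "('f \<Rightarrow> 'a list \<Rightarrow> 'a) \<Rightarrow> ('v \<Rightarrow> 'a) \<Rightarrow> ('f, 'v) trm \<Rightarrow> 'a" where
  "eval I \<sigma> (Var x) = \<sigma> x"
| "eval I \<sigma> (Fun f ts) = I f (map (eval I \<sigma>) ts)"

type_synonym 'f term_pair = "('f, nat) trm \<times> ('f, nat) trm"

definition gen :: "'f set \<Rightarrow> ('f \<Rightarrow> nat) \<Rightarrow> 'a set \<Rightarrow> ('f \<Rightarrow> 'a list \<Rightarrow> 'a)
    \<Rightarrow> 'a \<Rightarrow> 'a \<Rightarrow> 'f term_pair set" where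
  "gen Fs ar A I a b = {(s, t). wf_term Fs ar s \<and> wf_term Fs ar t \<and>
     (\<exists>\<sigma>. (\<forall>x \<in> vars s \<union> vars t. \<sigma> x \<in> A) \<and> eval I \<sigma> s = a \<and> eval I \<sigma> t = b)}"

definition gen2 :: "'f set \<Rightarrow> ('f \<Rightarrow> nat) \<Rightarrow> 'a set \<Rightarrow> ('f \<Rightarrow> 'a list \<Rightarrow> 'a)
    \<Rightarrow> 'b set \<Rightarrow> ('f \<Rightarrow> 'b list \<Rightarrow> 'b) \<Rightarrow> 'a \<Rightarrow> 'a \<Rightarrow> 'b \<Rightarrow> 'b \<Rightarrow> 'f term_pair set" where
  "gen2 Fs ar A I B J a b c d = gen Fs ar A I a b \<inter> gen Fs ar B J c d"

definition trivial :: "'f set \<Rightarrow> ('f \<Rightarrow> nat) \<Rightarrow> 'a set \<Rightarrow> ('f \<Rightarrow> 'a list \<Rightarrow> 'a)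
    \<Rightarrow> 'b set \<Rightarrow> ('f \<Rightarrow> 'b list \<Rightarrow> 'b) \<Rightarrow> 'f term_pair \<Rightarrow> bool" where
  "trivial Fs ar A I B J p \<longleftrightarrow>
     (\<forall>e\<in>A. \<forall>e'\<in>A. p \<in> gen Fs ar A I e e') \<and> (\<forall>e\<in>B. \<forall>e'\<in>B. p \<in> gen Fs ar B J e e')"

definition lesssim :: "'f set \<Rightarrow> ('f \<Rightarrow> nat) \<Rightarrow> 'a set \<Rightarrow> ('f \<Rightarrow> 'a list \<Rightarrow> 'a)
    \<Rightarrow> 'b set \<Rightarrow> ('f \<Rightarrow> 'b list \<Rightarrow> 'b) \<Rightarrow> 'a \<Rightarrow> 'a \<Rightarrow> 'b \<Rightarrow> 'b \<Rightarrow> bool" where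
  "lesssim Fs ar A I B J a b c d \<longleftrightarrow>
     (\<forall>p \<in> gen Fs ar A I a b \<union> gen Fs ar B J c d. trivial Fs ar A I B J p)
   \<or> ((\<exists>p \<in> gen2 Fs ar A I B J a b c d. \<not> trivial Fs ar A I B J p) \<and>
      (\<forall>c'\<in>B. \<forall>d'\<in>B. gen2 Fs ar A I B J a b c d \<subseteq> gen2 Fs ar A I B J a b c' d'
          \<longrightarrow> gen2 Fs ar A I B J a b c d = gen2 Fs ar A I B J a b c' d'))"

definition arrow_approx :: "'f set \<Rightarrow> ('f \<Rightarrow> nat) \<Rightarrow> 'a set \<Rightarrow> ('f \<Rightarrow> 'a list \<Rightarrow> 'a)
    \<Rightarrow> 'b set \<Rightarrow> ('f \<Rightarrow> 'b list \<Rightarrow> 'b) \<Rightarrow> 'a \<Rightarrow> 'a \<Rightarrow> 'b \<Rightarrow> 'b \<Rightarrow> bool" where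
  "arrow_approx Fs ar A I B J a b c d \<longleftrightarrow>
     lesssim Fs ar A I B J a b c d \<and> lesssim Fs ar B J A I c d a b"

definition analogy :: "'f set \<Rightarrow> ('f \<Rightarrow> nat) \<Rightarrow> 'a set \<Rightarrow> ('f \<Rightarrow> 'a list \<Rightarrow> 'a)
    \<Rightarrow> 'b set \<Rightarrow> ('f \<Rightarrow> 'b list \<Rightarrow> 'b) \<Rightarrow> 'a \<Rightarrow> 'a \<Rightarrow> 'b \<Rightarrow> 'b \<Rightarrow> bool" where
  "analogy Fs ar A I B J a b c d \<longleftrightarrow>
     arrow_approx Fs ar A I B J a b c d \<and> arrow_approx Fs ar A I B J b a d c"

end

theory Submission
  imports Defs
begin

text \<open>A constant symbol naming a generalizes the arrow a \<rightarrow> a and no arrow c \<rightarrow> c with c \<noteq> a.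
  So a \<rightarrow> a has strictly more common generalizations with itself than with c \<rightarrow> c, and
  these are not all trivial; hence a \<rightarrow> a is not \<lesssim>-related to c \<rightarrow> c.\<close>

lemma constant_pair_in_gen_iff:
  assumes "f \<in> Fs" and "ar f = 0"
  shows "(Fun f [], Fun f []) \<in> gen Fs ar A I a b \<longleftrightarrow> a = I f [] \<and> b = I f []"
  using assms by (auto simp: gen_def)

lemma gen2_subset_gen2_self: "gen2 Fs ar A I B J a b c d \<subseteq> gen2 Fs ar A I A I a b a b"
  by (auto simp: gen2_def)

lemma not_lesssim_if_strictly_refined:
  assumes "p \<in> gen Fs ar A I a b" and "\<not> trivial Fs ar A I B J p"
    and "c' \<in> B" and "d' \<in> B"
    and "gen2 Fs ar A I B J a b c d \<subset> gen2 Fs ar A I B J a b c' d'"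
  shows "\<not> lesssim Fs ar A I B J a b c d"
  using assms unfolding lesssim_def by blast

lemma not_analogy_refl_if_constant:
  assumes const_f: "f \<in> Fs" "ar f = 0" and a: "a \<in> A" "I f [] = a"
    and c: "c \<in> A" "c \<noteq> a"
  shows "\<not> analogy Fs ar A I A I a a c c"
proof -
  let ?k = "(Fun f [] :: (_, nat) trm, Fun f [] :: (_, nat) trm)"
  have k_aa: "?k \<in> gen Fs ar A I a a" and k_cc: "?k \<notin> gen Fs ar A I c c"
    using c by (simp_all add: constant_pair_in_gen_iff const_f a)
  have "\<not> trivial Fs ar A I A I ?k"
    using k_cc c by (auto simp: trivial_def)
  moreover have "gen2 Fs ar A I A I a a c c \<subset> gen2 Fs ar A I A I a a a a"
    by (rule psubsetI[OF gen2_subset_gen2_self]) (use k_aa k_cc in \<open>auto simp: gen2_def\<close>)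
  ultimately have "\<not> lesssim Fs ar A I A I a a c c"
    using not_lesssim_if_strictly_refined[OF k_aa _ a(1) a(1)] by blast
  then show ?thesis
    by (simp add: analogy_def arrow_approx_def)
qed

theorem theorem3:
  shows "\<exists>(Fs :: nat set) (ar :: nat \<Rightarrow> nat) (A :: nat set) (I :: nat \<Rightarrow> nat list \<Rightarrow> nat) a c.
    is_algebra Fs ar A I \<and> a \<in> A \<and> c \<in> A \<and> \<not> analogy Fs ar A I A I a a c c"
proof -
  let ?Fs = "{0} :: nat set" and ?ar = "\<lambda>_ :: nat. 0 :: nat"
    and ?A = "{0, 1} :: nat set" and ?I = "\<lambda>(_ :: nat) (_ :: nat list). 0 :: nat"
  have "is_algebra ?Fs ?ar ?A ?I"
    by (simp add: is_algebra_def)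
  moreover have "\<not> analogy ?Fs ?ar ?A ?I ?A ?I 0 0 1 1"
    by (rule not_analogy_refl_if_constant[of 0]) auto
  ultimately show ?thesis
    by blast
qed

end
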